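(* Let $y_1, \ldots, y_n \in \mathfrak m$ be a minimal system of generators of $\mathfrak m$, so $R = k[[y_1, \ldots, y_n]]$. Let $d = \max\{a_n + 1, c_R\}$ and let $\widetilde y_i$ be the truncation of $y_i$ at $t^d$, i.e. if $y_i = \sum_{j \ge 0} c_{i,j} t^j$ then $\widetilde y_i = \sum_{j < d} c_{i,j} t^j$. Then $R = k[[\widetilde y_1, \ldots, \widetilde y_n]]$. In particular, $R$ can always be generated (as $k[[\cdot]]$) by finitely many polynomials in $t$.
   Context: Let $k$ be a field and let $(R,\mathfrak m)$ be a complete local noetherian domain of dimension $1$ containing $k$ with $R/\mathfrak m = k$, with normalization $\overline R$ having residue field $k$, so $\overline R = k[[t]]$ and $R \subseteq k[[t]]$ is finite birational. Let $v$ be the $t$-adic valuation. For $A \subseteq k((t))$ let $v(A) = \{v(f): f\in A\setminus\{0\}\}$. The conductor is $\mathfrak C_R = \{x\in\overline R: x\overline R\subseteq R\} = t^{c_R}\overline R$, $c_R$ the conductor degree. The Herzog–Kunz sequence of $R$ is $v(\mathfrak m)\setminus v(\mathfrak m^2)$ listed increasingly as $a_1 < \cdots < a_n$ (with $n = \mathrm{edim}(R)$). For $y_i\in\mathfrak m$, $k[[y_1,\ldots,y_n]]$ is the image of $k[[Y_1,\ldots,Y_n]]\to k[[t]]$, $Y_i\mapsto y_i$. *)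

theory Defs
  imports "HOL-Computational_Algebra.Formal_Power_Series"
begin

text \<open>Formal power series over a field k play the role of k[[t]]; fps_X is t,
  and the t-adic valuation v is subdegree.\<close>

definition k_subalgebra :: "'a::field fps set \<Rightarrow> bool" where
  "k_subalgebra R \<longleftrightarrow> (\<forall>c. fps_const c \<in> R) \<and>
     (\<forall>x\<in>R. \<forall>y\<in>R. x + y \<in> R \<and> x * y \<in> R \<and> - x \<in> R)"

definition fps_finite_over :: "'a::field fps set \<Rightarrow> bool" where
  "fps_finite_over R \<longleftrightarrow> (\<exists>G. finite G \<and>
     (\<forall>f. \<exists>r. (\<forall>g\<in>G. r g \<in> R) \<and> f = (\<Sum>g\<in>G. r g * g)))"

definition fps_birational :: "'a::field fps set \<Rightarrow> bool" where
  "fps_birational R \<longleftrightarrow> (\<forall>f. \<exists>a\<in>R. \<exists>b\<in>R. b \<noteq> 0 \<and> f * b = a)"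

text \<open>Local with maximal ideal R \<inter> t k[[t]] (residue field k).\<close>
definition fps_local :: "'a::field fps set \<Rightarrow> bool" where
  "fps_local R \<longleftrightarrow> (\<forall>x\<in>R. fps_nth x 0 \<noteq> 0 \<longrightarrow> inverse x \<in> R)"

definition max_ideal :: "'a::field fps set \<Rightarrow> 'a fps set" where
  "max_ideal R = {x \<in> R. fps_nth x 0 = 0}"

definition fps_ideal_prod :: "'a::field fps set \<Rightarrow> 'a fps set \<Rightarrow> 'a fps set" where
  "fps_ideal_prod I J = {x. \<exists>(N::nat) a b. (\<forall>i<N. a i \<in> I \<and> b i \<in> J) \<and> x = (\<Sum>i<N. a i * b i)}"

definition val_set :: "'a::field fps set \<Rightarrow> nat set" where
  "val_set A = subdegree ` (A - {0})"

definition HK_max :: "'a::field fps set \<Rightarrow> nat" where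
  "HK_max R = Max (val_set (max_ideal R) - val_set (fps_ideal_prod (max_ideal R) (max_ideal R)))"

definition conductor_degree :: "'a::field fps set \<Rightarrow> nat" where
  "conductor_degree R = (LEAST c. \<forall>z. fps_X ^ c * z \<in> R)"

definition fps_gen_ideal :: "'a::field fps set \<Rightarrow> nat set \<Rightarrow> (nat \<Rightarrow> 'a fps) \<Rightarrow> 'a fps set" where
  "fps_gen_ideal R S y = {x. \<exists>r. (\<forall>i\<in>S. r i \<in> R) \<and> x = (\<Sum>i\<in>S. r i * y i)}"

definition min_generators :: "'a::field fps set \<Rightarrow> nat \<Rightarrow> (nat \<Rightarrow> 'a fps) \<Rightarrow> bool" where
  "min_generators R n y \<longleftrightarrow> (\<forall>i<n. y i \<in> max_ideal R) \<and>
     fps_gen_ideal R {..<n} y = max_ideal R \<and>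
     (\<forall>j<n. fps_gen_ideal R ({..<n} - {j}) y \<noteq> max_ideal R)"

text \<open>Image of the substitution homomorphism k[[Y_0..Y_{n-1}]] \<rightarrow> k[[t]], Y_i \<mapsto> y_i,
  applied to the power series with coefficient function c on multi-indices \<alpha>
  (supported in {..<n}). Assuming all y_i have zero constant term, the monomial
  y^\<alpha> has order \<ge> |\<alpha>|, so the j-th coefficient is the given finite sum.\<close>
definition pseries_eval :: "nat \<Rightarrow> (nat \<Rightarrow> 'a::field fps) \<Rightarrow> ((nat \<Rightarrow> nat) \<Rightarrow> 'a) \<Rightarrow> 'a fps" where
  "pseries_eval n y c = Abs_fps (\<lambda>j. \<Sum>\<alpha>\<in>{\<alpha>. (\<forall>i. n \<le> i \<longrightarrow> \<alpha> i = 0) \<and> (\<Sum>i<n. \<alpha> i) \<le> j}.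
       c \<alpha> * fps_nth (\<Prod>i<n. y i ^ \<alpha> i) j)"

definition pseries_subalg :: "nat \<Rightarrow> (nat \<Rightarrow> 'a::field fps) \<Rightarrow> 'a fps set" where
  "pseries_subalg n y = range (pseries_eval n y)"

definition fps_truncate :: "nat \<Rightarrow> 'a::field fps \<Rightarrow> 'a fps" where
  "fps_truncate d f = Abs_fps (\<lambda>j. if j < d then fps_nth f j else 0)"

definition fps_is_poly :: "'a::field fps \<Rightarrow> bool" where
  "fps_is_poly f \<longleftrightarrow> (\<exists>N. \<forall>j\<ge>N. fps_nth f j = 0)"

end

theory Submission
  imports Defs
begin

text \<open>Let \<open>\<m>\<close> be the maximal ideal and \<open>c\<close> the conductor degree, so \<open>t\<^sup>c k[[t]] \<subseteq> R\<close>.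
  Beyond \<open>a\<^sub>n\<close> every value of \<open>\<m>\<close> is a value of \<open>\<m>\<^sup>2\<close>, so the leading terms of a series of
  order at least \<open>d\<close> can be peeled off by elements of \<open>\<m>\<^sup>2\<close> until its order exceeds \<open>2c + 1\<close>,
  and then it lies in \<open>t\<^sup>c\<^sup>+\<^sup>1 \<cdot> t\<^sup>c\<^sup>+\<^sup>1 k[[t]] \<subseteq> \<m>\<^sup>2\<close>. Hence \<open>y\<^sub>i - z\<^sub>i \<in> \<m>\<^sup>2\<close> for the truncations
  \<open>z\<^sub>i\<close>, so the \<open>z\<^sub>i\<close> generate \<open>\<m>\<close> modulo \<open>\<m>\<^sup>2\<close>; iterating, they generate \<open>\<m>\<close> modulo every
  power of \<open>t\<close>, and a nonzero element of order \<open>v\<close> of the ideal they generate absorbs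
  \<open>t\<^sup>c\<^sup>+\<^sup>v k[[t]]\<close> by the conductor. Finally, once the \<open>z\<^sub>i\<close> generate \<open>\<m>\<close>, every \<open>x \<in> R\<close> is a
  power series in them: subtract the constant term, expand the rest in the \<open>z\<^sub>i\<close> and recurse
  on the coefficients, degree by degree.\<close>

unbundle fps_syntax

lemma fps_X_power_dvd_iff_nth:
  "fps_X ^ k dvd (f :: 'a::field fps) \<longleftrightarrow> (\<forall>j<k. f $ j = 0)"
proof
  assume "fps_X ^ k dvd f"
  then show "\<forall>j<k. f $ j = 0" by (auto simp: dvd_def fps_X_power_mult_nth)
next
  assume vanish: "\<forall>j<k. f $ j = 0"
  show "fps_X ^ k dvd f"
  proof (cases "f = 0")
    case False
    then have "k \<le> subdegree f" using vanish by (intro subdegree_geI) auto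
    then have "f = fps_shift k f * fps_X ^ k" by (rule subdegree_decompose')
    then show ?thesis by (metis dvd_triv_right)
  qed simp
qed

lemma fps_X_power_dvd_nth: "fps_X ^ k dvd (f :: 'a::field fps) \<Longrightarrow> j < k \<Longrightarrow> f $ j = 0"
  by (simp add: fps_X_power_dvd_iff_nth)

lemma fps_X_dvd_iff_nth_0: "fps_X dvd (f :: 'a::field fps) \<longleftrightarrow> f $ 0 = 0"
  using fps_X_power_dvd_iff_nth[of 1 f] by simp

lemma dvd_fps_X_power_subdegree_mult:
  assumes "(u :: 'a::field fps) \<noteq> 0"
  shows "u dvd fps_X ^ subdegree u * g"
proof (cases "g = 0")
  case False
  then show ?thesis using assms by (simp add: fps_dvd_iff fps_subdegree_mult_fps_X_power(1))
qed simp

lemma fps_X_power_in_val_set: "fps_X ^ g \<in> A \<Longrightarrow> g \<in> val_set A"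
  unfolding val_set_def by (rule rev_image_eqI[of "fps_X ^ g"]) (auto simp: fps_X_power_subdegree)

lemma fps_truncate_is_poly: "fps_is_poly (fps_truncate d f)"
  unfolding fps_is_poly_def fps_truncate_def by (intro exI[of _ d]) simp

lemma fps_X_power_dvd_sub_truncate: "fps_X ^ d dvd (f - fps_truncate d f)"
  by (simp add: fps_X_power_dvd_iff_nth fps_truncate_def)

lemma fps_ideal_prod_zero: "0 \<in> fps_ideal_prod I J"
  unfolding fps_ideal_prod_def by (intro CollectI exI[of _ 0]) simp

lemma fps_ideal_prod_add:
  assumes "x \<in> fps_ideal_prod I J" "y \<in> fps_ideal_prod I J"
  shows "x + y \<in> fps_ideal_prod I J"
proof -
  obtain N :: nat and a b where x: "\<forall>i<N. a i \<in> I \<and> b i \<in> J" "x = (\<Sum>i<N. a i * b i)"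
    using assms(1) by (auto simp: fps_ideal_prod_def)
  obtain M :: nat and a' b' where y: "\<forall>i<M. a' i \<in> I \<and> b' i \<in> J" "y = (\<Sum>i<M. a' i * b' i)"
    using assms(2) by (auto simp: fps_ideal_prod_def)
  define A where "A i = (if i < N then a i else a' (i - N))" for i
  define B where "B i = (if i < N then b i else b' (i - N))" for i
  have split: "(\<Sum>i<N + K. F i) = (\<Sum>i<N. F i) + (\<Sum>i<K. F (N + i))" for K and F :: "nat \<Rightarrow> 'a fps"
    by (induction K) (simp_all add: algebra_simps)
  have "(\<Sum>i<N. A i * B i) = x" "(\<Sum>i<M. A (N + i) * B (N + i)) = y"
    unfolding x(2) y(2) by (auto intro!: sum.cong simp: A_def B_def)
  then have "x + y = (\<Sum>i<N + M. A i * B i)" unfolding split by simp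
  moreover have "\<forall>i<N + M. A i \<in> I \<and> B i \<in> J"
    using x(1) y(1) by (auto simp: A_def B_def)
  ultimately show ?thesis unfolding fps_ideal_prod_def by blast
qed

lemma fps_ideal_prod_sum:
  "(\<And>i. i \<in> A \<Longrightarrow> f i \<in> fps_ideal_prod I J) \<Longrightarrow> sum f A \<in> fps_ideal_prod I J"
  by (induction A rule: infinite_finite_induct) (auto intro: fps_ideal_prod_zero fps_ideal_prod_add)

lemma fps_ideal_prod_mult_left:
  assumes "\<And>a. a \<in> I \<Longrightarrow> r * a \<in> I" and "x \<in> fps_ideal_prod I J"
  shows "r * x \<in> fps_ideal_prod I J"
proof -
  obtain N :: nat and a b where x: "\<forall>i<N. a i \<in> I \<and> b i \<in> J" "x = (\<Sum>i<N. a i * b i)"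
    using assms(2) by (auto simp: fps_ideal_prod_def)
  have "r * x = (\<Sum>i<N. (r * a i) * b i)" unfolding x(2) sum_distrib_left by (simp only: mult.assoc)
  moreover have "\<forall>i<N. r * a i \<in> I \<and> b i \<in> J" using x(1) assms(1) by blast
  ultimately show ?thesis unfolding fps_ideal_prod_def
    by (intro CollectI exI[of _ N] exI[of _ "\<lambda>i. r * a i"] exI[of _ b]) simp
qed

locale fps_subalg =
  fixes R :: "'a::field fps set"
  assumes subalg: "k_subalgebra R"
begin

lemma const_in [simp]: "fps_const a \<in> R" using subalg by (simp add: k_subalgebra_def)
lemma zero_in [simp]: "0 \<in> R" using const_in[of 0] by simp
lemma one_in [simp]: "1 \<in> R" using const_in[of 1] by simp
lemma add_in [simp]: "x \<in> R \<Longrightarrow> y \<in> R \<Longrightarrow> x + y \<in> R" using subalg by (simp add: k_subalgebra_def)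
lemma mult_in [simp]: "x \<in> R \<Longrightarrow> y \<in> R \<Longrightarrow> x * y \<in> R" using subalg by (simp add: k_subalgebra_def)
lemma uminus_in [simp]: "x \<in> R \<Longrightarrow> - x \<in> R" using subalg unfolding k_subalgebra_def by blast
lemma diff_in [simp]: "x \<in> R \<Longrightarrow> y \<in> R \<Longrightarrow> x - y \<in> R" using add_in[of x "- y"] by simp

lemma sum_in: "(\<And>i. i \<in> A \<Longrightarrow> f i \<in> R) \<Longrightarrow> sum f A \<in> R"
  by (induction A rule: infinite_finite_induct) auto

lemma prod_in: "(\<And>i. i \<in> A \<Longrightarrow> f i \<in> R) \<Longrightarrow> prod f A \<in> R"
  by (induction A rule: infinite_finite_induct) auto

lemma power_in: "x \<in> R \<Longrightarrow> x ^ k \<in> R"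
  by (induction k) auto

lemma max_ideal_iff: "x \<in> max_ideal R \<longleftrightarrow> x \<in> R \<and> x $ 0 = 0"
  by (simp add: max_ideal_def)

lemma max_ideal_mult: "r \<in> R \<Longrightarrow> x \<in> max_ideal R \<Longrightarrow> r * x \<in> max_ideal R"
  by (simp add: max_ideal_iff)

lemma gen_ideal_iff:
  "x \<in> fps_gen_ideal R S z \<longleftrightarrow> (\<exists>r. (\<forall>i\<in>S. r i \<in> R) \<and> x = (\<Sum>i\<in>S. r i * z i))"
  by (simp add: fps_gen_ideal_def)

lemma gen_ideal_zero: "0 \<in> fps_gen_ideal R S z"
  unfolding gen_ideal_iff by (intro exI[of _ "\<lambda>_. 0"]) simp

lemma gen_ideal_add:
  assumes "x \<in> fps_gen_ideal R S z" "x' \<in> fps_gen_ideal R S z"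
  shows "x + x' \<in> fps_gen_ideal R S z"
proof -
  obtain r r' where "\<forall>i\<in>S. r i \<in> R" "x = (\<Sum>i\<in>S. r i * z i)"
    and "\<forall>i\<in>S. r' i \<in> R" "x' = (\<Sum>i\<in>S. r' i * z i)"
    using assms unfolding gen_ideal_iff by blast
  then show ?thesis unfolding gen_ideal_iff
    by (intro exI[of _ "\<lambda>i. r i + r' i"]) (simp add: sum.distrib distrib_right)
qed

lemma gen_ideal_mult:
  assumes "a \<in> R" "x \<in> fps_gen_ideal R S z"
  shows "a * x \<in> fps_gen_ideal R S z"
proof -
  obtain r where "\<forall>i\<in>S. r i \<in> R" "x = (\<Sum>i\<in>S. r i * z i)"
    using assms(2) unfolding gen_ideal_iff by blast
  then show ?thesis unfolding gen_ideal_iff using assms(1)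
    by (intro exI[of _ "\<lambda>i. a * r i"]) (simp add: sum_distrib_left mult.assoc)
qed

lemma gen_ideal_sum:
  "(\<And>i. i \<in> A \<Longrightarrow> f i \<in> fps_gen_ideal R S z) \<Longrightarrow> sum f A \<in> fps_gen_ideal R S z"
  by (induction A rule: infinite_finite_induct) (auto intro: gen_ideal_zero gen_ideal_add)

lemma generator_in_gen_ideal:
  assumes "finite S" "i \<in> S"
  shows "z i \<in> fps_gen_ideal R S z"
proof -
  have "(\<Sum>l\<in>S. (if l = i then 1 else 0) * z l) = (\<Sum>l\<in>S. if l = i then z l else 0)"
    by (rule sum.cong) auto
  also have "\<dots> = z i" using assms by simp
  finally have "(\<Sum>l\<in>S. (if l = i then 1 else 0) * z l) = z i" .
  then show ?thesis unfolding gen_ideal_iff by (intro exI[of _ "\<lambda>l. if l = i then 1 else 0"]) auto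
qed

lemma gen_ideal_subset_max_ideal:
  assumes "\<And>i. i \<in> S \<Longrightarrow> z i \<in> max_ideal R"
  shows "fps_gen_ideal R S z \<subseteq> max_ideal R"
proof
  fix x assume "x \<in> fps_gen_ideal R S z"
  then obtain r where r: "\<forall>i\<in>S. r i \<in> R" "x = (\<Sum>i\<in>S. r i * z i)"
    unfolding gen_ideal_iff by blast
  have "x \<in> R" unfolding r(2) using r(1) assms by (auto intro!: sum_in simp: max_ideal_iff)
  moreover have "x $ 0 = 0" unfolding r(2) fps_sum_nth using assms by (simp add: max_ideal_iff)
  ultimately show "x \<in> max_ideal R" by (simp add: max_ideal_iff)
qed

end

text \<open>The common denominator \<open>b\<close> of a finite generating set of \<open>k[[t]]\<close> satisfies
  \<open>b k[[t]] \<subseteq> R\<close>, and \<open>b k[[t]] = t\<^sup>v k[[t]]\<close> for \<open>v\<close> the order of \<open>b\<close>.\<close>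

lemma (in fps_subalg) conductor_exists:
  assumes fin: "fps_finite_over R" and bir: "fps_birational R"
  shows "\<exists>c. \<forall>z. fps_X ^ c * z \<in> R"
proof -
  obtain G where G: "finite G" "\<And>f. \<exists>r. (\<forall>g\<in>G. r g \<in> R) \<and> f = (\<Sum>g\<in>G. r g * g)"
    using fin unfolding fps_finite_over_def by blast
  obtain A B where AB: "\<And>g. A g \<in> R \<and> B g \<in> R \<and> B g \<noteq> 0 \<and> g * B g = A g"
    using bir unfolding fps_birational_def by metis
  define b where "b = (\<Prod>g\<in>G. B g)"
  have b0: "b \<noteq> 0" unfolding b_def using G(1) AB by simp
  have bg: "b * g \<in> R" if "g \<in> G" for g
  proof -
    have "b * g = A g * (\<Prod>h\<in>G - {g}. B h)"
      using AB[of g] G(1) that by (simp add: b_def prod.remove algebra_simps)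
    moreover have "(\<Prod>h\<in>G - {g}. B h) \<in> R" using AB by (intro prod_in) auto
    ultimately show ?thesis using AB mult_in by metis
  qed
  have bf: "b * f \<in> R" for f
  proof -
    obtain r where r: "\<forall>g\<in>G. r g \<in> R" "f = (\<Sum>g\<in>G. r g * g)" using G(2) by blast
    have "b * f = (\<Sum>g\<in>G. r g * (b * g))" unfolding r(2) by (simp add: sum_distrib_left algebra_simps)
    then show ?thesis using r(1) bg by (auto intro!: sum_in)
  qed
  have "fps_X ^ subdegree b * z \<in> R" for z
    using dvd_fps_X_power_subdegree_mult[OF b0, of z] bf by (auto simp: dvd_def)
  then show ?thesis by blast
qed

lemma (in fps_subalg) conductor_degree:
  assumes "fps_finite_over R" and "fps_birational R"
  shows "fps_X ^ conductor_degree R * z \<in> R"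
  using LeastI_ex[OF conductor_exists[OF assms]] unfolding conductor_degree_def by blast

locale fps_conductor = fps_subalg R for R :: "'a::field fps set" +
  fixes c :: nat
  assumes conductor: "\<And>z. fps_X ^ c * z \<in> R"
begin

abbreviation "\<m> \<equiv> max_ideal R"
abbreviation "\<m>2 \<equiv> fps_ideal_prod (max_ideal R) (max_ideal R)"

lemma in_R_if_fps_X_power_dvd: "fps_X ^ k dvd f \<Longrightarrow> c \<le> k \<Longrightarrow> f \<in> R"
  using power_le_dvd[of fps_X k f c] conductor by (auto simp: dvd_def)

lemma fps_X_power_in_max_ideal: "c \<le> k \<Longrightarrow> 0 < k \<Longrightarrow> fps_X ^ k \<in> \<m>"
  using in_R_if_fps_X_power_dvd[of k "fps_X ^ k"] by (simp add: max_ideal_iff)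

lemma max_ideal_sq_mult: "r \<in> R \<Longrightarrow> x \<in> \<m>2 \<Longrightarrow> r * x \<in> \<m>2"
  by (rule fps_ideal_prod_mult_left) (auto intro: max_ideal_mult)

lemma max_ideal_sq_if_fps_X_power_dvd:
  assumes "fps_X ^ (2 * c + 2) dvd f"
  shows "f \<in> \<m>2"
proof -
  obtain g where g: "f = fps_X ^ (2 * c + 2) * g" using assms by (auto simp: dvd_def)
  define p where "p = (fps_X :: 'a fps) ^ (c + 1)"
  have f: "f = p * (p * g)"
    unfolding g p_def mult_2 by (simp add: power_add algebra_simps)
  have p: "p \<in> \<m>" unfolding p_def by (rule fps_X_power_in_max_ideal) auto
  have pg: "p * g \<in> \<m>"
    using in_R_if_fps_X_power_dvd[of "c + 1" "p * g"] by (simp add: p_def max_ideal_iff)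
  show ?thesis unfolding fps_ideal_prod_def
    by (intro CollectI exI[of _ "1::nat"] exI[of _ "\<lambda>_. p"] exI[of _ "\<lambda>_. p * g"]) (simp add: f p pg)
qed

lemma finite_HK_sequence: "finite (val_set \<m> - val_set \<m>2)"
proof (rule finite_subset)
  show "val_set \<m> - val_set \<m>2 \<subseteq> {..<2 * c + 2}"
  proof
    fix g assume g: "g \<in> val_set \<m> - val_set \<m>2"
    show "g \<in> {..<2 * c + 2}"
    proof (rule ccontr)
      assume "g \<notin> {..<2 * c + 2}"
      then have "fps_X ^ g \<in> \<m>2" by (intro max_ideal_sq_if_fps_X_power_dvd le_imp_power_dvd) auto
      then show False using g fps_X_power_in_val_set by blast
    qed
  qed
qed simp

lemma peel_leading_term_max_ideal_sq:
  assumes "c \<le> k" "HK_max R < k" "fps_X ^ k dvd f"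
  shows "\<exists>w\<in>\<m>2. fps_X ^ Suc k dvd (f - w)"
proof (cases "f $ k = 0")
  case True
  then have "fps_X ^ Suc k dvd f"
    using fps_X_power_dvd_nth[OF assms(3)] unfolding fps_X_power_dvd_iff_nth by (auto simp: less_Suc_eq)
  then show ?thesis using fps_ideal_prod_zero by (intro bexI[of _ 0]) auto
next
  case False
  have "k \<in> val_set \<m>" using assms by (intro fps_X_power_in_val_set fps_X_power_in_max_ideal) auto
  moreover have "k \<notin> val_set \<m> - val_set \<m>2"
    using assms(2) finite_HK_sequence unfolding HK_max_def by (auto dest: Max_ge)
  ultimately have "k \<in> val_set \<m>2" by blast
  then obtain w where w: "w \<in> \<m>2" "w \<noteq> 0" "subdegree w = k" unfolding val_set_def by blast
  define a where "a = f $ k / w $ k"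
  have "fps_const a * w \<in> \<m>2" using w(1) by (intro max_ideal_sq_mult) auto
  moreover have "fps_X ^ Suc k dvd (f - fps_const a * w)"
    unfolding fps_X_power_dvd_iff_nth
    using fps_X_power_dvd_nth[OF assms(3)] w by (auto simp: less_Suc_eq a_def)
  ultimately show ?thesis by blast
qed

lemma max_ideal_sq_if_beyond_HK:
  assumes "HK_max R < d" "c \<le> d" "fps_X ^ d dvd f"
  shows "f \<in> \<m>2"
proof -
  define P where "P k \<longleftrightarrow> (\<forall>f. fps_X ^ k dvd f \<longrightarrow> f \<in> \<m>2)" for k
  have "P d"
  proof (rule inc_induct[of d "max d (2 * c + 2)"])
    show "P (max d (2 * c + 2))"
      unfolding P_def by (metis max_ideal_sq_if_fps_X_power_dvd power_le_dvd max.cobounded2)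
  next
    fix k assume k: "d \<le> k" and IH: "P (Suc k)"
    show "P k" unfolding P_def
    proof (intro allI impI)
      fix f :: "'a fps" assume f: "fps_X ^ k dvd f"
      have "c \<le> k" "HK_max R < k" using k assms(1,2) by auto
      then obtain w where "w \<in> \<m>2" "fps_X ^ Suc k dvd (f - w)"
        using peel_leading_term_max_ideal_sq f by blast
      then have "(f - w) + w \<in> \<m>2" using IH unfolding P_def by (blast intro: fps_ideal_prod_add)
      then show "f \<in> \<m>2" by simp
    qed
  qed simp
  then show ?thesis using assms(3) unfolding P_def by blast
qed

end

locale perturbed_generators = fps_conductor R c for R :: "'a::field fps set" and c +
  fixes n :: nat and y z :: "nat \<Rightarrow> 'a fps" and d :: nat
  assumes generates: "fps_gen_ideal R {..<n} y = max_ideal R"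
    and perturbation: "\<And>i. i < n \<Longrightarrow> fps_X ^ d dvd (y i - z i)"
    and beyond_HK: "HK_max R < d" and beyond_conductor: "c \<le> d"
begin

abbreviation "J \<equiv> fps_gen_ideal R {..<n} z"

lemma perturbed_in_max_ideal:
  assumes "i < n"
  shows "z i \<in> \<m>"
proof -
  have y: "y i \<in> R" "y i $ 0 = 0"
    using generator_in_gen_ideal[of "{..<n}" i y] assms generates by (simp_all add: max_ideal_iff)
  have "y i - z i \<in> R" using perturbation[OF assms] beyond_conductor by (rule in_R_if_fps_X_power_dvd)
  then have "z i \<in> R" using diff_in[OF y(1)] by fastforce
  moreover have "(y i - z i) $ 0 = 0"
    using fps_X_power_dvd_nth[OF perturbation[OF assms], of 0] beyond_HK by simp
  ultimately show ?thesis using y(2) by (simp add: max_ideal_iff)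
qed

lemma approx_mod_max_ideal_sq:
  assumes "x \<in> \<m>"
  shows "\<exists>j\<in>J. x - j \<in> \<m>2"
proof -
  have "x \<in> fps_gen_ideal R {..<n} y" using assms generates by simp
  then obtain s where s: "\<forall>i\<in>{..<n}. s i \<in> R" "x = (\<Sum>i<n. s i * y i)"
    unfolding gen_ideal_iff by blast
  have "x - (\<Sum>i<n. s i * z i) = (\<Sum>i<n. s i * (y i - z i))"
    unfolding s(2) by (simp add: sum_subtractf right_diff_distrib)
  also have "\<dots> \<in> \<m>2"
    using s(1) perturbation beyond_HK beyond_conductor
    by (intro fps_ideal_prod_sum max_ideal_sq_mult max_ideal_sq_if_beyond_HK) auto
  finally have "x - (\<Sum>i<n. s i * z i) \<in> \<m>2" .
  moreover have "(\<Sum>i<n. s i * z i) \<in> J" unfolding gen_ideal_iff using s(1) by blast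
  ultimately show ?thesis by blast
qed

text \<open>Writing \<open>x - j = \<Sum> a\<^sub>i b\<^sub>i\<close> with \<open>a\<^sub>i, b\<^sub>i \<in> \<m>\<close>, approximating each \<open>a\<^sub>i\<close> to order \<open>k\<close>
  gains one order, since \<open>t\<close> divides every \<open>b\<^sub>i\<close>.\<close>

lemma approx_mod_fps_X_power:
  assumes "x \<in> \<m>"
  shows "\<exists>j\<in>J. fps_X ^ k dvd (x - j)"
  using assms
proof (induction k arbitrary: x)
  case 0
  show ?case by (intro bexI[of _ 0] gen_ideal_zero) simp
next
  case (Suc k)
  obtain j0 where j0: "j0 \<in> J" "x - j0 \<in> \<m>2" using approx_mod_max_ideal_sq[OF Suc.prems] by blast
  obtain N :: nat and a b where ab: "\<forall>i<N. a i \<in> \<m> \<and> b i \<in> \<m>" "x - j0 = (\<Sum>i<N. a i * b i)"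
    using j0(2) by (auto simp: fps_ideal_prod_def)
  have "\<exists>j'. \<forall>i. i < N \<longrightarrow> j' i \<in> J \<and> fps_X ^ k dvd (a i - j' i)"
    by (rule choice) (use Suc.IH ab(1) in blast)
  then obtain j' where j': "\<And>i. i < N \<Longrightarrow> j' i \<in> J \<and> fps_X ^ k dvd (a i - j' i)"
    by blast
  define j where "j = j0 + (\<Sum>i<N. j' i * b i)"
  have "j' i * b i \<in> J" if "i < N" for i
    using gen_ideal_mult[of "b i" "j' i"] j'[OF that] ab(1) that by (simp add: max_ideal_iff mult.commute)
  then have "j \<in> J" unfolding j_def using j0(1) by (intro gen_ideal_add gen_ideal_sum) auto
  moreover have "x - j = (\<Sum>i<N. (a i - j' i) * b i)"
  proof -
    have "x - j = (x - j0) - (\<Sum>i<N. j' i * b i)" by (simp add: j_def)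
    then show ?thesis unfolding ab(2) by (simp add: sum_subtractf left_diff_distrib)
  qed
  moreover have "fps_X ^ Suc k dvd (a i - j' i) * b i" if "i < N" for i
  proof -
    have "fps_X dvd b i" using ab(1) that by (simp add: fps_X_dvd_iff_nth_0 max_ideal_iff)
    with j'[OF that] have "fps_X ^ k * fps_X dvd (a i - j' i) * b i" by (blast intro: mult_dvd_mono)
    then show ?thesis by (simp only: power_Suc2)
  qed
  ultimately show ?case by (auto intro!: bexI[of _ j] dvd_sum)
qed

text \<open>Since \<open>u\<close> divides every series of order at least \<open>v\<close>, the conductor gives
  \<open>X\<^sup>c\<^sup>+\<^sup>v k[[t]] \<subseteq> R u\<close>.\<close>

lemma fps_X_power_mult_in_perturbed_ideal:
  assumes "u \<in> J" "u \<noteq> 0"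
  shows "fps_X ^ (c + subdegree u) * g \<in> J"
proof -
  obtain h where h: "fps_X ^ subdegree u * g = u * h"
    using dvd_fps_X_power_subdegree_mult[OF assms(2)] by (auto simp: dvd_def)
  have "fps_X ^ (c + subdegree u) * g = (fps_X ^ c * h) * u"
    unfolding power_add mult.assoc h by (simp add: ac_simps)
  then show ?thesis using gen_ideal_mult[OF conductor assms(1)] by simp
qed

lemma perturbed_ideal_nonzero: "\<exists>u\<in>J. u \<noteq> 0"
proof -
  have "fps_X ^ (c + 1) \<in> \<m>" by (rule fps_X_power_in_max_ideal) auto
  then obtain j where j: "j \<in> J" "fps_X ^ (c + 2) dvd (fps_X ^ (c + 1) - j)"
    using approx_mod_fps_X_power by blast
  have "j \<noteq> 0"
  proof
    assume "j = 0"
    then have "fps_X ^ (c + 2) dvd (fps_X ^ (c + 1) :: 'a fps)" using j(2) by simp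
    then show False using dvd_imp_subdegree_le[of "fps_X ^ (c + 2)" "fps_X ^ (c + 1) :: 'a fps"]
      by (simp add: fps_X_power_subdegree)
  qed
  then show ?thesis using j(1) by blast
qed

lemma perturbed_generates: "J = \<m>"
proof
  show "J \<subseteq> \<m>" using perturbed_in_max_ideal by (intro gen_ideal_subset_max_ideal) simp
next
  show "\<m> \<subseteq> J"
  proof
    fix x assume "x \<in> \<m>"
    obtain u where u: "u \<in> J" "u \<noteq> 0" using perturbed_ideal_nonzero by blast
    obtain j where j: "j \<in> J" "fps_X ^ (c + subdegree u) dvd (x - j)"
      using approx_mod_fps_X_power[OF \<open>x \<in> \<m>\<close>] by blast
    then have "x - j \<in> J" using fps_X_power_mult_in_perturbed_ideal[OF u] by (auto simp: dvd_def)
    with j(1) have "j + (x - j) \<in> J" by (rule gen_ideal_add)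
    then show "x \<in> J" by simp
  qed
qed

end

definition mdeg :: "nat \<Rightarrow> (nat \<Rightarrow> nat) \<Rightarrow> nat" where
  "mdeg n \<alpha> = (\<Sum>i<n. \<alpha> i)"

definition fps_monomial :: "nat \<Rightarrow> (nat \<Rightarrow> 'a::field fps) \<Rightarrow> (nat \<Rightarrow> nat) \<Rightarrow> 'a fps" where
  "fps_monomial n z \<alpha> = (\<Prod>i<n. z i ^ \<alpha> i)"

definition multi_indices_le :: "nat \<Rightarrow> nat \<Rightarrow> (nat \<Rightarrow> nat) set" where
  "multi_indices_le n j = {\<alpha>. (\<forall>i. n \<le> i \<longrightarrow> \<alpha> i = 0) \<and> mdeg n \<alpha> \<le> j}"

definition multi_indices_eq :: "nat \<Rightarrow> nat \<Rightarrow> (nat \<Rightarrow> nat) set" where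
  "multi_indices_eq n k = {\<alpha>. (\<forall>i. n \<le> i \<longrightarrow> \<alpha> i = 0) \<and> mdeg n \<alpha> = k}"

definition homogeneous_fps :: "nat \<Rightarrow> (nat \<Rightarrow> 'a::field fps) \<Rightarrow> nat \<Rightarrow> ((nat \<Rightarrow> nat) \<Rightarrow> 'a) \<Rightarrow> 'a fps" where
  "homogeneous_fps n z k h = (\<Sum>\<alpha>\<in>multi_indices_eq n k. fps_const (h \<alpha>) * fps_monomial n z \<alpha>)"

lemma finite_multi_indices_le: "finite (multi_indices_le n j)"
proof (rule finite_subset)
  show "multi_indices_le n j \<subseteq> {\<alpha>. \<forall>i. (i \<in> {..<n} \<longrightarrow> \<alpha> i \<in> {..j}) \<and> (i \<notin> {..<n} \<longrightarrow> \<alpha> i = 0)}"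
  proof (intro subsetI CollectI allI conjI impI)
    fix \<alpha> i assume "\<alpha> \<in> multi_indices_le n j" "i \<in> {..<n}"
    moreover from this have "\<alpha> i \<le> mdeg n \<alpha>" unfolding mdeg_def by (intro member_le_sum) auto
    ultimately show "\<alpha> i \<in> {..j}" by (auto simp: multi_indices_le_def)
  qed (auto simp: multi_indices_le_def)
qed (use finite_set_of_finite_funs[of "{..<n}" "{..j}" 0] in simp)

lemma finite_multi_indices_eq: "finite (multi_indices_eq n k)"
  by (rule finite_subset[OF _ finite_multi_indices_le[of n k]])
    (auto simp: multi_indices_eq_def multi_indices_le_def)

lemma multi_indices_le_eq_UN: "multi_indices_le n j = (\<Union>k\<le>j. multi_indices_eq n k)"
  by (auto simp: multi_indices_le_def multi_indices_eq_def)

lemma mdeg_Suc: "i < n \<Longrightarrow> mdeg n (\<alpha>(i := Suc (\<alpha> i))) = Suc (mdeg n \<alpha>)"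
  unfolding mdeg_def by (simp add: sum.remove[of "{..<n}" i] sum.cong[of _ _ "\<alpha>(i := Suc (\<alpha> i))" \<alpha>])

lemma fps_monomial_Suc: "i < n \<Longrightarrow> fps_monomial n z (\<alpha>(i := Suc (\<alpha> i))) = z i * fps_monomial n z \<alpha>"
  unfolding fps_monomial_def
  by (simp add: prod.remove[of "{..<n}" i] prod.cong[of _ _ "\<lambda>l. z l ^ (\<alpha>(i := Suc (\<alpha> i))) l"] mult.assoc)

lemma fps_X_power_mdeg_dvd_monomial:
  assumes "\<And>i. i < n \<Longrightarrow> z i $ 0 = 0"
  shows "fps_X ^ mdeg n \<alpha> dvd fps_monomial n z \<alpha>"
proof -
  have "fps_X ^ mdeg n \<alpha> = (\<Prod>i<n. (fps_X :: 'a::field fps) ^ \<alpha> i)"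
    unfolding mdeg_def by (simp add: power_sum)
  also have "\<dots> dvd fps_monomial n z \<alpha>" unfolding fps_monomial_def
    using assms by (intro prod_dvd_prod dvd_power_same) (simp add: fps_X_dvd_iff_nth_0)
  finally show ?thesis .
qed

lemma pseries_eval_nth:
  "pseries_eval n z cf $ j = (\<Sum>\<alpha>\<in>multi_indices_le n j. cf \<alpha> * fps_monomial n z \<alpha> $ j)"
  by (simp add: pseries_eval_def multi_indices_le_def mdeg_def fps_monomial_def)

lemma successive_approximation:
  fixes T :: "nat \<Rightarrow> 'a::field fps set" and Q :: "nat \<Rightarrow> 'b \<Rightarrow> 'a fps"
  assumes step: "\<And>k w. w \<in> T k \<Longrightarrow> \<exists>h. w - Q k h \<in> T (Suc k)"
    and order: "\<And>k w. w \<in> T k \<Longrightarrow> fps_X ^ k dvd w"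
    and "x \<in> T 0"
  shows "\<exists>h. \<forall>j. x $ j = (\<Sum>k\<le>j. Q k (h k)) $ j"
proof -
  have "\<forall>k w. \<exists>h. w \<in> T k \<longrightarrow> w - Q k h \<in> T (Suc k)" using step by blast
  then obtain s where s: "\<And>k w. w \<in> T k \<Longrightarrow> w - Q k (s k w) \<in> T (Suc k)" by metis
  define rest where "rest = rec_nat x (\<lambda>k w. w - Q k (s k w))"
  have rest_in: "rest k \<in> T k" for k
    by (induction k) (simp_all add: rest_def assms(3) s)
  have decompose: "x = (\<Sum>l<k. Q l (s l (rest l))) + rest k" for k
    by (induction k) (simp_all add: rest_def)
  have "x $ j = (\<Sum>k\<le>j. Q k (s k (rest k))) $ j" for j
    using arg_cong[OF decompose[of "Suc j"], of "\<lambda>f. f $ j"]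
      fps_X_power_dvd_nth[OF order[OF rest_in[of "Suc j"]]]
    by (simp add: lessThan_Suc_atMost)
  then show ?thesis by (intro exI[of _ "\<lambda>k. s k (rest k)"] allI)
qed

locale max_ideal_generators = fps_conductor R c for R :: "'a::field fps set" and c +
  fixes n :: nat and z :: "nat \<Rightarrow> 'a fps"
  assumes generates: "fps_gen_ideal R {..<n} z = max_ideal R"
begin

lemma generator_in_max_ideal: "i < n \<Longrightarrow> z i \<in> \<m>"
  using generator_in_gen_ideal[of "{..<n}" i z] generates by simp

lemma fps_X_power_mdeg_dvd: "fps_X ^ mdeg n \<alpha> dvd fps_monomial n z \<alpha>"
  using generator_in_max_ideal by (intro fps_X_power_mdeg_dvd_monomial) (simp add: max_ideal_iff)

lemma monomial_in: "fps_monomial n z \<alpha> \<in> R"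
  using generator_in_max_ideal unfolding fps_monomial_def
  by (intro prod_in power_in) (simp add: max_ideal_iff)

definition monomial_span :: "nat \<Rightarrow> 'a fps set" where
  "monomial_span k =
     {w. \<exists>r. (\<forall>\<alpha>\<in>multi_indices_eq n k. r \<alpha> \<in> R) \<and> w = (\<Sum>\<alpha>\<in>multi_indices_eq n k. r \<alpha> * fps_monomial n z \<alpha>)}"

lemma monomial_span_zero: "0 \<in> monomial_span k"
  unfolding monomial_span_def by (intro CollectI exI[of _ "\<lambda>_. 0"]) simp

lemma monomial_span_add:
  assumes "w \<in> monomial_span k" "w' \<in> monomial_span k"
  shows "w + w' \<in> monomial_span k"
proof -
  obtain r r' where "\<forall>\<alpha>\<in>multi_indices_eq n k. r \<alpha> \<in> R \<and> r' \<alpha> \<in> R"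
    "w = (\<Sum>\<alpha>\<in>multi_indices_eq n k. r \<alpha> * fps_monomial n z \<alpha>)"
    "w' = (\<Sum>\<alpha>\<in>multi_indices_eq n k. r' \<alpha> * fps_monomial n z \<alpha>)"
    using assms unfolding monomial_span_def by auto
  then show ?thesis unfolding monomial_span_def
    by (intro CollectI exI[of _ "\<lambda>\<alpha>. r \<alpha> + r' \<alpha>"]) (simp add: sum.distrib distrib_right)
qed

lemma monomial_span_sum: "(\<And>i. i \<in> A \<Longrightarrow> f i \<in> monomial_span k) \<Longrightarrow> sum f A \<in> monomial_span k"
  by (induction A rule: infinite_finite_induct) (auto intro: monomial_span_zero monomial_span_add)

lemma monomial_span_single:
  assumes "s \<in> R" "\<beta> \<in> multi_indices_eq n k"
  shows "s * fps_monomial n z \<beta> \<in> monomial_span k"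
proof -
  have "(\<Sum>\<alpha>\<in>multi_indices_eq n k. (if \<alpha> = \<beta> then s else 0) * fps_monomial n z \<alpha>)
      = (\<Sum>\<alpha>\<in>multi_indices_eq n k. if \<alpha> = \<beta> then s * fps_monomial n z \<beta> else 0)"
    by (rule sum.cong) auto
  also have "\<dots> = s * fps_monomial n z \<beta>" using assms(2) finite_multi_indices_eq by simp
  finally show ?thesis unfolding monomial_span_def using assms(1)
    by (intro CollectI exI[of _ "\<lambda>\<alpha>. if \<alpha> = \<beta> then s else 0"]) auto
qed

lemma monomial_span_0: "x \<in> R \<Longrightarrow> x \<in> monomial_span 0"
  using monomial_span_single[of x "\<lambda>_. 0" 0]
  by (simp add: multi_indices_eq_def mdeg_def fps_monomial_def)

lemma fps_X_power_dvd_if_monomial_span: "w \<in> monomial_span k \<Longrightarrow> fps_X ^ k dvd w"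
  using fps_X_power_mdeg_dvd unfolding monomial_span_def multi_indices_eq_def
  by (auto intro!: dvd_sum dvd_mult)

text \<open>Subtracting the constant terms of the coefficients leaves coefficients in \<open>\<m>\<close>, which
  are expanded in the generators, raising the degree of every monomial by one.\<close>

lemma monomial_span_step:
  assumes "w \<in> monomial_span k"
  shows "\<exists>h. w - homogeneous_fps n z k h \<in> monomial_span (Suc k)"
proof -
  obtain r where r: "\<forall>\<alpha>\<in>multi_indices_eq n k. r \<alpha> \<in> R"
    "w = (\<Sum>\<alpha>\<in>multi_indices_eq n k. r \<alpha> * fps_monomial n z \<alpha>)"
    using assms unfolding monomial_span_def by blast
  define h where "h \<alpha> = r \<alpha> $ 0" for \<alpha>
  have "w - homogeneous_fps n z k h
      = (\<Sum>\<alpha>\<in>multi_indices_eq n k. (r \<alpha> - fps_const (h \<alpha>)) * fps_monomial n z \<alpha>)"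
    unfolding r(2) homogeneous_fps_def by (simp add: sum_subtractf left_diff_distrib)
  also have "\<dots> \<in> monomial_span (Suc k)"
  proof (rule monomial_span_sum)
    fix \<alpha> assume \<alpha>: "\<alpha> \<in> multi_indices_eq n k"
    have "r \<alpha> - fps_const (h \<alpha>) \<in> fps_gen_ideal R {..<n} z"
      using r(1) \<alpha> generates by (simp add: max_ideal_iff h_def)
    then obtain s where s: "\<forall>i<n. s i \<in> R" "r \<alpha> - fps_const (h \<alpha>) = (\<Sum>i<n. s i * z i)"
      unfolding gen_ideal_iff by auto
    have "(r \<alpha> - fps_const (h \<alpha>)) * fps_monomial n z \<alpha>
        = (\<Sum>i<n. s i * fps_monomial n z (\<alpha>(i := Suc (\<alpha> i))))"
      unfolding s(2) sum_distrib_right by (rule sum.cong) (simp_all add: fps_monomial_Suc mult.assoc)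
    also have "\<dots> \<in> monomial_span (Suc k)"
      using s(1) \<alpha> by (intro monomial_span_sum monomial_span_single) (auto simp: multi_indices_eq_def mdeg_Suc)
    finally show "(r \<alpha> - fps_const (h \<alpha>)) * fps_monomial n z \<alpha> \<in> monomial_span (Suc k)" .
  qed
  finally show ?thesis by blast
qed

lemma in_pseries_subalg:
  assumes "x \<in> R"
  shows "x \<in> pseries_subalg n z"
proof -
  obtain h where h: "\<And>j. x $ j = (\<Sum>k\<le>j. homogeneous_fps n z k (h k)) $ j"
    using successive_approximation[of monomial_span "homogeneous_fps n z" x]
      monomial_span_step fps_X_power_dvd_if_monomial_span monomial_span_0[OF assms] by blast
  define cf where "cf \<alpha> = h (mdeg n \<alpha>) \<alpha>" for \<alpha>
  have "x $ j = pseries_eval n z cf $ j" for j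
  proof -
    have "x $ j = (\<Sum>k\<le>j. \<Sum>\<alpha>\<in>multi_indices_eq n k. cf \<alpha> * fps_monomial n z \<alpha> $ j)"
      unfolding h homogeneous_fps_def fps_sum_nth
      by (rule sum.cong[OF refl], rule sum.cong[OF refl]) (simp add: cf_def multi_indices_eq_def)
    also have "\<dots> = (\<Sum>\<alpha>\<in>multi_indices_le n j. cf \<alpha> * fps_monomial n z \<alpha> $ j)"
      unfolding multi_indices_le_eq_UN
      by (rule sum.UNION_disjoint[symmetric])
        (simp_all add: finite_multi_indices_eq, auto simp: multi_indices_eq_def)
    finally show ?thesis by (simp add: pseries_eval_nth)
  qed
  then show ?thesis unfolding pseries_subalg_def by (auto intro: fps_ext)
qed

text \<open>Modulo \<open>t\<^sup>c\<close> a power series in the generators agrees with its polynomial truncation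
  at degree \<open>c\<close>, and the conductor absorbs the difference.\<close>

lemma pseries_eval_in: "pseries_eval n z cf \<in> R"
proof -
  define P where "P = (\<Sum>\<alpha>\<in>multi_indices_le n c. fps_const (cf \<alpha>) * fps_monomial n z \<alpha>)"
  have "P \<in> R" unfolding P_def by (intro sum_in mult_in monomial_in) simp
  moreover have "fps_X ^ c dvd (pseries_eval n z cf - P)"
  proof (unfold fps_X_power_dvd_iff_nth, intro allI impI)
    fix j assume "j < c"
    have "P $ j = (\<Sum>\<alpha>\<in>multi_indices_le n c. cf \<alpha> * fps_monomial n z \<alpha> $ j)"
      unfolding P_def fps_sum_nth by simp
    also have "\<dots> = (\<Sum>\<alpha>\<in>multi_indices_le n j. cf \<alpha> * fps_monomial n z \<alpha> $ j)"
    proof (rule sum.mono_neutral_right[OF finite_multi_indices_le])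
      show "multi_indices_le n j \<subseteq> multi_indices_le n c"
        using \<open>j < c\<close> by (auto simp: multi_indices_le_def)
      show "\<forall>\<alpha>\<in>multi_indices_le n c - multi_indices_le n j. cf \<alpha> * fps_monomial n z \<alpha> $ j = 0"
        using fps_X_power_dvd_nth[OF fps_X_power_mdeg_dvd] by (auto simp: multi_indices_le_def) (meson leI)
    qed
    finally show "(pseries_eval n z cf - P) $ j = 0" by (simp add: pseries_eval_nth)
  qed
  then have "pseries_eval n z cf - P \<in> R" by (rule in_R_if_fps_X_power_dvd) simp
  ultimately show ?thesis using add_in[of "pseries_eval n z cf - P" P] by simp
qed

lemma eq_pseries_subalg: "R = pseries_subalg n z"
  using in_pseries_subalg pseries_eval_in unfolding pseries_subalg_def by blast

end

theorem mainTheorem15: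
  fixes R :: "'a::field fps set" and n :: nat and y :: "nat \<Rightarrow> 'a fps"
  assumes "k_subalgebra R"
    and "fps_finite_over R"
    and "fps_birational R"
    and "fps_local R"
    and "min_generators R n y"
  defines "d \<equiv> max (HK_max R + 1) (conductor_degree R)"
  shows "R = pseries_subalg n (\<lambda>i. fps_truncate d (y i))
         \<and> (\<exists>N p. (\<forall>i<N. fps_is_poly (p i)) \<and> R = pseries_subalg N p)"
proof -
  interpret fps_subalg R by unfold_locales (rule assms(1))
  interpret fps_conductor R "conductor_degree R"
    by unfold_locales (rule conductor_degree[OF assms(2,3)])
  define z where "z = (\<lambda>i. fps_truncate d (y i))"
  have "fps_gen_ideal R {..<n} y = max_ideal R" using assms(5) by (simp add: min_generators_def)
  moreover have "fps_X ^ d dvd (y i - z i)" for i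
    unfolding z_def by (rule fps_X_power_dvd_sub_truncate)
  moreover have "HK_max R < d" "conductor_degree R \<le> d" unfolding d_def by simp_all
  ultimately interpret perturbed_generators R "conductor_degree R" n y z d
    by unfold_locales
  interpret max_ideal_generators R "conductor_degree R" n z
    by unfold_locales (rule perturbed_generates)
  have "\<forall>i<n. fps_is_poly (z i)" by (simp add: z_def fps_truncate_is_poly)
  with eq_pseries_subalg show ?thesis unfolding z_def[symmetric] by (intro conjI exI[of _ n] exI[of _ z])
qed

end
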